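(* Each of the following five functions fails to be matrix-convex, in the following sense: there exist $n\ge 1$, a vector $\mathbf{s}\in\mathbb{R}^n$, two matrices $\mathbf{X}_1,\mathbf{X}_2$ in the indicated domain, and $\lambda\in[0,1]$ such that $$f(\mathbf{s},\lambda\mathbf{X}_1+(1-\lambda)\mathbf{X}_2) > \lambda f(\mathbf{s},\mathbf{X}_1)+(1-\lambda) f(\mathbf{s},\mathbf{X}_2).$$ (i) Directed functions, with domain the set of $n\times n$ entrywise nonnegative row-stochastic matrices $\mathbf{X}$ (i.e. $\mathbf{X}\mathbf{1}=\mathbf{1}$), where $\mathbf{D}^{\mathrm{in}}(\mathbf{X})=\mathrm{diag}(\mathbf{X}^\top\mathbf{1})$: - P-Dir: $f(\mathbf{s},\mathbf{X})=\mathbf{s}^\top(2\mathbf{I}-\mathbf{X})^{-\top}(2\mathbf{I}-\mathbf{X})^{-1}\mathbf{s}$; - D-Dir: $f(\mathbf{s},\mathbf{X})=\tfrac12\mathbf{s}^\top(2\mathbf{I}-\mathbf{X})^{-\top}(\mathbf{I}+\mathbf{D}^{\mathrm{in}}(\mathbf{X})-2\mathbf{X})(2\mathbf{I}-\mathbf{X})^{-1}\mathbf{s}$; - PD-Dir: $f(\mathbf{s},\mathbf{X})=\tfrac12\mathbf{s}^\top(2\mathbf{I}-\mathbf{X})^{-\top}(\mathbf{I}-\mathbf{D}^{\mathrm{in}}(\mathbf{X}))(2\mathbf{I}-\mathbf{X})^{-1}\mathbf{s}$. (ii) Undirected functions, with domain the set of $n\times n$ Laplacian matrices $\mathbf{L}$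 of undirected graphs with nonnegative edge weights: - P-Undir: $f(\mathbf{s},\mathbf{L})=\mathbf{s}^\top(\mathbf{I}+\mathbf{L})^{-2}\mathbf{s}$; - D-Undir: $f(\mathbf{s},\mathbf{L})=\mathbf{s}^\top(\mathbf{I}+\mathbf{L})^{-1}\mathbf{L}(\mathbf{I}+\mathbf{L})^{-1}\mathbf{s}$.
   Context: $\mathbf{1}$ is the all-ones vector and $\mathbf{I}$ the identity matrix. A Laplacian of an undirected weighted graph with weight matrix $\mathbf{W}$ (symmetric, nonnegative, zero diagonal) is $\mathbf{L}=\mathrm{diag}(\mathbf{W}\mathbf{1})-\mathbf{W}$. For a row-stochastic nonnegative $\mathbf{X}$, the matrix $2\mathbf{I}-\mathbf{X}$ is invertible, and $\mathbf{I}+\mathbf{L}$ is invertible for any such Laplacian. A function $f(\mathbf{s},\cdot)$ is called matrix-convex if $f(\mathbf{s},\lambda\mathbf{X}_1+(1-\lambda)\mathbf{X}_2)\le\lambda f(\mathbf{s},\mathbf{X}_1)+(1-\lambda)f(\mathbf{s},\mathbf{X}_2)$ for all $\lambda\in[0,1]$ and all matrices $\mathbf{X}_1,\mathbf{X}_2$ in the domain. *)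

theory Defs
  imports "Jordan_Normal_Form.Matrix"
begin

definition ones_vec :: "nat \<Rightarrow> real vec" where
  "ones_vec n = vec n (\<lambda>_. 1)"

definition minv :: "nat \<Rightarrow> real mat \<Rightarrow> real mat" where
  "minv n A = (SOME B. B \<in> carrier_mat n n \<and> A * B = 1\<^sub>m n \<and> B * A = 1\<^sub>m n)"

definition qform :: "real vec \<Rightarrow> real mat \<Rightarrow> real" where
  "qform s M = s \<bullet> (M *\<^sub>v s)"

definition row_stochastic :: "nat \<Rightarrow> real mat \<Rightarrow> bool" where
  "row_stochastic n X \<longleftrightarrow> X \<in> carrier_mat n n \<and>
     (\<forall>i<n. \<forall>j<n. X $$ (i,j) \<ge> 0) \<and> X *\<^sub>v ones_vec n = ones_vec n"

definition laplacian :: "nat \<Rightarrow> real mat \<Rightarrow> bool" where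
  "laplacian n L \<longleftrightarrow> (\<exists>W \<in> carrier_mat n n.
     (\<forall>i<n. \<forall>j<n. W $$ (i,j) = W $$ (j,i) \<and> W $$ (i,j) \<ge> 0) \<and>
     (\<forall>i<n. W $$ (i,i) = 0) \<and>
     L = mat_diag n (\<lambda>i. (W *\<^sub>v ones_vec n) $ i) - W)"

definition D_in :: "nat \<Rightarrow> real mat \<Rightarrow> real mat" where
  "D_in n X = mat_diag n (\<lambda>i. (transpose_mat X *\<^sub>v ones_vec n) $ i)"

definition P_Dir :: "nat \<Rightarrow> real vec \<Rightarrow> real mat \<Rightarrow> real" where
  "P_Dir n s X = (let M = minv n (2 \<cdot>\<^sub>m 1\<^sub>m n - X) in
     qform s (transpose_mat M * M))"

definition D_Dir :: "nat \<Rightarrow> real vec \<Rightarrow> real mat \<Rightarrow> real" where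
  "D_Dir n s X = (let M = minv n (2 \<cdot>\<^sub>m 1\<^sub>m n - X) in
     (1/2) * qform s (transpose_mat M * (1\<^sub>m n + D_in n X - 2 \<cdot>\<^sub>m X) * M))"

definition PD_Dir :: "nat \<Rightarrow> real vec \<Rightarrow> real mat \<Rightarrow> real" where
  "PD_Dir n s X = (let M = minv n (2 \<cdot>\<^sub>m 1\<^sub>m n - X) in
     (1/2) * qform s (transpose_mat M * (1\<^sub>m n - D_in n X) * M))"

definition P_Undir :: "nat \<Rightarrow> real vec \<Rightarrow> real mat \<Rightarrow> real" where
  "P_Undir n s L = (let N = minv n (1\<^sub>m n + L) in qform s (N * N))"

definition D_Undir :: "nat \<Rightarrow> real vec \<Rightarrow> real mat \<Rightarrow> real" where
  "D_Undir n s L = (let N = minv n (1\<^sub>m n + L) in qform s (N * L * N))"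

definition not_matrix_convex ::
  "(nat \<Rightarrow> real mat \<Rightarrow> bool) \<Rightarrow> (nat \<Rightarrow> real vec \<Rightarrow> real mat \<Rightarrow> real) \<Rightarrow> bool" where
  "not_matrix_convex D f \<longleftrightarrow> (\<exists>n\<ge>1. \<exists>s \<in> carrier_vec n. \<exists>X1 X2 l.
     D n X1 \<and> D n X2 \<and> 0 \<le> l \<and> l \<le> 1 \<and>
     f n s (l \<cdot>\<^sub>m X1 + (1 - l) \<cdot>\<^sub>m X2) > l * f n s X1 + (1 - l) * f n s X2)"

end

theory Submission
  imports Defs "Jordan_Normal_Form.Determinant"
begin

text \<open>Each function is refuted at \<open>\<lambda> = 1/2\<close> by explicit small matrices. On \<open>2 \<times> 2\<close>
  matrices the inverses \<open>(2I - X)\<^sup>-\<^sup>1\<close> and \<open>(I + L)\<^sup>-\<^sup>1\<close> come from the adjugate formula; for the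
  three-vertex Laplacians needed for P-Undir the inverse is checked directly.\<close>

lemma minv_eqI:
  assumes A: "A \<in> carrier_mat n n" and B: "B \<in> carrier_mat n n" and AB: "A * B = 1\<^sub>m n"
  shows "minv n A = B"
proof -
  have "\<exists>B. B \<in> carrier_mat n n \<and> A * B = 1\<^sub>m n \<and> B * A = 1\<^sub>m n"
    using B AB mat_mult_left_right_inverse[OF A B AB] by blast
  then have C: "minv n A \<in> carrier_mat n n" "minv n A * A = 1\<^sub>m n"
    unfolding minv_def by (metis (mono_tags, lifting) someI_ex)+
  have "minv n A = minv n A * (A * B)" using C(1) AB by simp
  also have "\<dots> = (minv n A * A) * B" using A B C(1) by simp
  also have "\<dots> = B" using C(2) B by simp
  finally show ?thesis .
qed

lemma not_matrix_convex_midpointI: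
  assumes "n \<ge> 1" "s \<in> carrier_vec n" "D n X" "D n Y"
    and "f n s ((1/2) \<cdot>\<^sub>m X + (1/2) \<cdot>\<^sub>m Y) > (f n s X + f n s Y) / 2"
  shows "not_matrix_convex D f"
  unfolding not_matrix_convex_def
  using assms by (intro exI[of _ n] conjI bexI[of _ s] exI[of _ X] exI[of _ Y] exI[of _ "1/2"]) auto

definition mat2 :: "real \<Rightarrow> real \<Rightarrow> real \<Rightarrow> real \<Rightarrow> real mat" where
  "mat2 a b c d = mat 2 2 (\<lambda>(i, j). [[a, b], [c, d]] ! i ! j)"

definition vec2 :: "real \<Rightarrow> real \<Rightarrow> real vec" where
  "vec2 x y = vec 2 (\<lambda>i. [x, y] ! i)"

lemma mat2_carrier [simp]: "mat2 a b c d \<in> carrier_mat 2 2"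
  and dim_mat2 [simp]: "dim_row (mat2 a b c d) = 2" "dim_col (mat2 a b c d) = 2"
  by (simp_all add: mat2_def)

lemma index_mat2 [simp]:
  "i < 2 \<Longrightarrow> j < 2 \<Longrightarrow> mat2 a b c d $$ (i, j) = [[a, b], [c, d]] ! i ! j"
  by (simp add: mat2_def)

lemma vec2_carrier [simp]: "vec2 x y \<in> carrier_vec 2"
  and dim_vec2 [simp]: "dim_vec (vec2 x y) = 2"
  by (simp_all add: vec2_def)

lemma index_vec2 [simp]: "i < 2 \<Longrightarrow> vec2 x y $ i = [x, y] ! i"
  by (simp add: vec2_def)

lemma less_2_cases: "(i::nat) < 2 \<Longrightarrow> i = 0 \<or> i = 1"
  by auto

lemma sum_2: "(\<Sum>i = 0..<2. g i) = g 0 + g (1::nat)"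
  by (simp add: numeral_2_eq_2)

lemma mat2_eqI:
  assumes "A \<in> carrier_mat 2 2"
    and "A $$ (0, 0) = a" "A $$ (0, 1) = b" "A $$ (1, 0) = c" "A $$ (1, 1) = d"
  shows "A = mat2 a b c d"
  using assms by (intro eq_matI) (auto dest!: less_2_cases)

lemma vec2_eqI:
  assumes "v \<in> carrier_vec 2" "v $ 0 = x" "v $ 1 = y"
  shows "v = vec2 x y"
  using assms by (intro eq_vecI) (auto dest!: less_2_cases)

lemma mat2_eq_iff [simp]:
  "mat2 a b c d = mat2 a' b' c' d' \<longleftrightarrow> a = a' \<and> b = b' \<and> c = c' \<and> d = d'"
proof
  assume "mat2 a b c d = mat2 a' b' c' d'"
  then have "mat2 a b c d $$ (i, j) = mat2 a' b' c' d' $$ (i, j)" for i j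
    by simp
  from this[of 0 0] this[of 0 1] this[of 1 0] this[of 1 1]
  show "a = a' \<and> b = b' \<and> c = c' \<and> d = d'"
    by simp
qed simp

lemma times_mat2 [simp]:
  "mat2 a b c d * mat2 a' b' c' d' = mat2 (a*a' + b*c') (a*b' + b*d') (c*a' + d*c') (c*b' + d*d')"
  by (rule mat2_eqI) (auto simp: scalar_prod_def sum_2)

lemma plus_mat2 [simp]: "mat2 a b c d + mat2 a' b' c' d' = mat2 (a + a') (b + b') (c + c') (d + d')"
  by (rule mat2_eqI) auto

lemma minus_mat2 [simp]: "mat2 a b c d - mat2 a' b' c' d' = mat2 (a - a') (b - b') (c - c') (d - d')"
  by (rule mat2_eqI) auto

lemma smult_mat2 [simp]: "r \<cdot>\<^sub>m mat2 a b c d = mat2 (r * a) (r * b) (r * c) (r * d)"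
  by (rule mat2_eqI) auto

lemma transpose_mat2 [simp]: "transpose_mat (mat2 a b c d) = mat2 a c b d"
  by (rule mat2_eqI) auto

lemma one_mat2: "1\<^sub>m 2 = mat2 1 0 0 1"
  by (rule mat2_eqI) auto

lemma mat_diag2: "mat_diag 2 g = mat2 (g 0) 0 0 (g 1)"
  by (rule mat2_eqI) (auto simp: mat_diag_def)

lemma mult_mat_vec2 [simp]: "mat2 a b c d *\<^sub>v vec2 x y = vec2 (a * x + b * y) (c * x + d * y)"
  by (intro vec2_eqI carrier_vecI) (auto simp: scalar_prod_def sum_2)

lemma scalar_prod_vec2 [simp]: "vec2 a b \<bullet> vec2 x y = a * x + b * y"
  by (simp add: scalar_prod_def sum_2)

lemma ones_vec2: "ones_vec 2 = vec2 1 1"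
  by (rule vec2_eqI) (auto simp: ones_vec_def)

lemma minv_mat2:
  assumes "a * d - b * c \<noteq> 0"
  shows "minv 2 (mat2 a b c d) = (1 / (a * d - b * c)) \<cdot>\<^sub>m mat2 d (- b) (- c) a"
  using assms by (intro minv_eqI) (simp_all add: one_mat2 diff_divide_distrib[symmetric] mult.commute)

lemma D_in_mat2: "D_in 2 (mat2 a b c d) = mat2 (a + c) 0 0 (b + d)"
  by (simp add: D_in_def mat_diag2 ones_vec2)

lemma row_stochastic_mat2:
  assumes "0 \<le> p" "p \<le> 1" "0 \<le> q" "q \<le> 1"
  shows "row_stochastic 2 (mat2 p (1 - p) q (1 - q))"
  using assms by (auto simp: row_stochastic_def ones_vec2 dest!: less_2_cases)

lemma laplacian_mat2:
  assumes "0 \<le> w"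
  shows "laplacian 2 (mat2 w (- w) (- w) w)"
  unfolding laplacian_def
  using assms by (intro bexI[of _ "mat2 0 w w 0"]) (auto simp: mat_diag2 ones_vec2 dest!: less_2_cases)

lemma not_matrix_convex_P_Dir: "not_matrix_convex row_stochastic P_Dir"
proof -
  let ?s = "vec2 2 1" and ?X1 = "mat2 1 0 0 1" and ?X2 = "mat2 1 0 1 0"
  have "P_Dir 2 ?s ?X1 = 5" "P_Dir 2 ?s ?X2 = 25 / 4" "P_Dir 2 ?s (mat2 1 0 (1/2) (1/2)) = 52 / 9"
    by (simp_all add: P_Dir_def qform_def one_mat2 minv_mat2)
  moreover have "row_stochastic 2 ?X1" "row_stochastic 2 ?X2"
    using row_stochastic_mat2[of 1 0] row_stochastic_mat2[of 1 1] by simp_all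
  ultimately show ?thesis
    by (intro not_matrix_convex_midpointI[where n = 2 and s = ?s and X = ?X1 and Y = ?X2]) simp_all
qed

lemma not_matrix_convex_D_Dir: "not_matrix_convex row_stochastic D_Dir"
proof -
  let ?s = "vec2 (-1) 2" and ?X1 = "mat2 1 0 0 1" and ?X2 = "mat2 0 1 1 0"
  have "D_Dir 2 ?s ?X1 = 0" "D_Dir 2 ?s ?X2 = 1" "D_Dir 2 ?s (mat2 (1/2) (1/2) (1/2) (1/2)) = 9 / 8"
    by (simp_all add: D_Dir_def qform_def one_mat2 minv_mat2 D_in_mat2)
  moreover have "row_stochastic 2 ?X1" "row_stochastic 2 ?X2"
    using row_stochastic_mat2[of 1 0] row_stochastic_mat2[of 0 1] by simp_all
  ultimately show ?thesis
    by (intro not_matrix_convex_midpointI[where n = 2 and s = ?s and X = ?X1 and Y = ?X2]) simp_all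
qed

lemma not_matrix_convex_PD_Dir: "not_matrix_convex row_stochastic PD_Dir"
proof -
  let ?s = "vec2 (-1) 2" and ?X1 = "mat2 1 0 1 0" and ?X2 = "mat2 0 1 0 1"
  have "PD_Dir 2 ?s ?X1 = - 3 / 8" "PD_Dir 2 ?s ?X2 = - 15 / 8" "PD_Dir 2 ?s (mat2 (1/2) (1/2) (1/2) (1/2)) = 0"
    by (simp_all add: PD_Dir_def qform_def one_mat2 minv_mat2 D_in_mat2)
  moreover have "row_stochastic 2 ?X1" "row_stochastic 2 ?X2"
    using row_stochastic_mat2[of 1 1] row_stochastic_mat2[of 0 0] by simp_all
  ultimately show ?thesis
    by (intro not_matrix_convex_midpointI[where n = 2 and s = ?s and X = ?X1 and Y = ?X2]) simp_all
qed

lemma not_matrix_convex_D_Undir: "not_matrix_convex laplacian D_Undir"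
proof -
  let ?s = "vec2 1 (-1)" and ?L1 = "mat2 0 0 0 0" and ?L2 = "mat2 1 (-1) (-1) 1"
  have "D_Undir 2 ?s ?L1 = 0" "D_Undir 2 ?s ?L2 = 4 / 9" "D_Undir 2 ?s (mat2 (1/2) (-1/2) (-1/2) (1/2)) = 1 / 2"
    by (simp_all add: D_Undir_def qform_def one_mat2 minv_mat2)
  moreover have "laplacian 2 ?L1" "laplacian 2 ?L2"
    using laplacian_mat2[of 0] laplacian_mat2[of 1] by simp_all
  ultimately show ?thesis
    by (intro not_matrix_convex_midpointI[where n = 2 and s = ?s and X = ?L1 and Y = ?L2]) simp_all
qed


definition mat3 :: "real \<Rightarrow> real \<Rightarrow> real \<Rightarrow> real \<Rightarrow> real \<Rightarrow> real \<Rightarrow> real \<Rightarrow> real \<Rightarrow> real \<Rightarrow> real mat"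
  where "mat3 a b c d e f g h k = mat 3 3 (\<lambda>(i, j). [[a, b, c], [d, e, f], [g, h, k]] ! i ! j)"

definition vec3 :: "real \<Rightarrow> real \<Rightarrow> real \<Rightarrow> real vec" where
  "vec3 x y z = vec 3 (\<lambda>i. [x, y, z] ! i)"

lemma mat3_carrier [simp]: "mat3 a b c d e f g h k \<in> carrier_mat 3 3"
  and dim_mat3 [simp]: "dim_row (mat3 a b c d e f g h k) = 3" "dim_col (mat3 a b c d e f g h k) = 3"
  by (simp_all add: mat3_def)

lemma index_mat3 [simp]:
  "i < 3 \<Longrightarrow> j < 3 \<Longrightarrow> mat3 a b c d e f g h k $$ (i, j) = [[a, b, c], [d, e, f], [g, h, k]] ! i ! j"
  by (simp add: mat3_def)

lemma vec3_carrier [simp]: "vec3 x y z \<in> carrier_vec 3"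
  and dim_vec3 [simp]: "dim_vec (vec3 x y z) = 3"
  by (simp_all add: vec3_def)

lemma index_vec3 [simp]: "i < 3 \<Longrightarrow> vec3 x y z $ i = [x, y, z] ! i"
  by (simp add: vec3_def)

lemma less_3_cases: "(i::nat) < 3 \<Longrightarrow> i = 0 \<or> i = 1 \<or> i = 2"
  by auto

lemma sum_3: "(\<Sum>i = 0..<3. g i) = g 0 + g 1 + g (2::nat)"
  by (simp add: numeral_3_eq_3 numeral_2_eq_2)

lemma mat3_eqI:
  assumes "A \<in> carrier_mat 3 3"
    and "A $$ (0, 0) = a" "A $$ (0, 1) = b" "A $$ (0, 2) = c"
    and "A $$ (1, 0) = d" "A $$ (1, 1) = e" "A $$ (1, 2) = f"
    and "A $$ (2, 0) = g" "A $$ (2, 1) = h" "A $$ (2, 2) = k"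
  shows "A = mat3 a b c d e f g h k"
  using assms by (intro eq_matI) (auto dest!: less_3_cases)

lemma vec3_eqI:
  assumes "v \<in> carrier_vec 3" "v $ 0 = x" "v $ 1 = y" "v $ 2 = z"
  shows "v = vec3 x y z"
  using assms by (intro eq_vecI) (auto dest!: less_3_cases)

lemma times_mat3 [simp]:
  "mat3 a b c d e f g h k * mat3 a' b' c' d' e' f' g' h' k' =
    mat3 (a*a' + b*d' + c*g') (a*b' + b*e' + c*h') (a*c' + b*f' + c*k')
         (d*a' + e*d' + f*g') (d*b' + e*e' + f*h') (d*c' + e*f' + f*k')
         (g*a' + h*d' + k*g') (g*b' + h*e' + k*h') (g*c' + h*f' + k*k')"
  by (intro mat3_eqI carrier_matI) (simp_all add: scalar_prod_def sum_3)

lemma plus_mat3 [simp]: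
  "mat3 a b c d e f g h k + mat3 a' b' c' d' e' f' g' h' k' =
    mat3 (a + a') (b + b') (c + c') (d + d') (e + e') (f + f') (g + g') (h + h') (k + k')"
  by (intro mat3_eqI carrier_matI) simp_all

lemma minus_mat3 [simp]:
  "mat3 a b c d e f g h k - mat3 a' b' c' d' e' f' g' h' k' =
    mat3 (a - a') (b - b') (c - c') (d - d') (e - e') (f - f') (g - g') (h - h') (k - k')"
  by (intro mat3_eqI carrier_matI) simp_all

lemma smult_mat3 [simp]:
  "r \<cdot>\<^sub>m mat3 a b c d e f g h k = mat3 (r*a) (r*b) (r*c) (r*d) (r*e) (r*f) (r*g) (r*h) (r*k)"
  by (intro mat3_eqI carrier_matI) simp_all

lemma one_mat3: "1\<^sub>m 3 = mat3 1 0 0 0 1 0 0 0 1"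
  by (intro mat3_eqI carrier_matI) simp_all

lemma mat_diag3: "mat_diag 3 g = mat3 (g 0) 0 0 0 (g 1) 0 0 0 (g 2)"
  by (intro mat3_eqI carrier_matI) (simp_all add: mat_diag_def)

lemma mult_mat_vec3 [simp]:
  "mat3 a b c d e f g h k *\<^sub>v vec3 x y z = vec3 (a*x + b*y + c*z) (d*x + e*y + f*z) (g*x + h*y + k*z)"
  by (intro vec3_eqI carrier_vecI) (simp_all add: scalar_prod_def sum_3)

lemma scalar_prod_vec3 [simp]: "vec3 a b c \<bullet> vec3 x y z = a*x + b*y + c*z"
  by (simp add: scalar_prod_def sum_3)

lemma ones_vec3: "ones_vec 3 = vec3 1 1 1"
  by (intro vec3_eqI) (simp_all add: ones_vec_def)

lemma laplacian_mat3:
  assumes "0 \<le> u" "0 \<le> v" "0 \<le> w"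
  shows "laplacian 3 (mat3 (u + v) (- u) (- v) (- u) (u + w) (- w) (- v) (- w) (v + w))"
  unfolding laplacian_def
  using assms by (intro bexI[of _ "mat3 0 u v u 0 w v w 0"]) (auto simp: mat_diag3 ones_vec3 dest!: less_3_cases)

text \<open>On two vertices every Laplacian is \<open>w\<close> times a fixed one, and then
  \<open>s\<^sup>T(I + L)\<^sup>-\<^sup>2s = (s\<^sub>1 + s\<^sub>2)\<^sup>2/2 + (s\<^sub>1 - s\<^sub>2)\<^sup>2/(2(1 + 2w)\<^sup>2)\<close> is convex in \<open>w\<close>:
  P-Undir needs three vertices.\<close>

lemma not_matrix_convex_P_Undir: "not_matrix_convex laplacian P_Undir"
proof -
  let ?s = "vec3 (-1) 0 1"
    and ?L1 = "mat3 1 0 (-1) 0 1 (-1) (-1) (-1) 2"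
    and ?L2 = "mat3 1 0 (-1) 0 2 (-2) (-1) (-2) 3"
    and ?L = "mat3 1 0 (-1) 0 (3/2) (-3/2) (-1) (-3/2) (5/2)"
  have "minv 3 (1\<^sub>m 3 + ?L1) = (1/8) \<cdot>\<^sub>m mat3 5 1 2 1 5 2 2 2 4"
    "minv 3 (1\<^sub>m 3 + ?L2) = (1/13) \<cdot>\<^sub>m mat3 8 2 3 2 7 4 3 4 6"
    "minv 3 (1\<^sub>m 3 + ?L) = (1/21) \<cdot>\<^sub>m mat3 13 3 5 3 12 6 5 6 10"
    by (intro minv_eqI; simp add: one_mat3)+
  then have "P_Undir 3 ?s ?L1 = 7 / 32" "P_Undir 3 ?s ?L2 = 38 / 169" "P_Undir 3 ?s ?L = 2 / 9"
    by (simp_all add: P_Undir_def qform_def)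
  moreover have "laplacian 3 ?L1" "laplacian 3 ?L2"
    using laplacian_mat3[of 0 1 1] laplacian_mat3[of 0 1 2] by simp_all
  ultimately show ?thesis
    by (intro not_matrix_convex_midpointI[where n = 3 and s = ?s and X = ?L1 and Y = ?L2]) simp_all
qed

theorem proposition1:
  shows "not_matrix_convex row_stochastic P_Dir \<and>
         not_matrix_convex row_stochastic D_Dir \<and>
         not_matrix_convex row_stochastic PD_Dir \<and>
         not_matrix_convex laplacian P_Undir \<and>
         not_matrix_convex laplacian D_Undir"
  using not_matrix_convex_P_Dir not_matrix_convex_D_Dir not_matrix_convex_PD_Dir
    not_matrix_convex_P_Undir not_matrix_convex_D_Undir
  by blast

end
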